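(* Let $X$ be a permutation graph, let $\mathfrak{to}(X)$ and $\mathfrak{to}(\overline X)$ be the sets of transitive orientations of $X$ and of its complement $\overline X$, and let $\mathfrak{to}(X,\overline X)=\mathfrak{to}(X)\times\mathfrak{to}(\overline X)$. The action of ${\rm Aut}(X)$ on $\mathfrak{to}(X,\overline X)$, given by $\pi\cdot(\to,\overline{\to})=(\pi(\to),\pi(\overline{\to}))$, is semiregular (every stabilizer is trivial).
   Context: A permutation graph is a graph $X$ such that both $X$ and $\overline X$ are comparability graphs (equivalently, the intersection graph of segments joining two parallel lines). A transitive orientation of a graph is an orientation of its edges which is a transitive relation. For $\pi\in{\rm Aut}(X)$ and a transitive orientation $\to$, the orientation $\pi(\to)$ is defined by: $x\to y$ implies $\pi(x)\,\pi(\to)\,\pi(y)$; note ${\rm Aut}(X)={\rm Aut}(\overline X)$. *)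

theory Defs
  imports Main
begin

definition simple_graph :: "'a set \<Rightarrow> ('a \<Rightarrow> 'a \<Rightarrow> bool) \<Rightarrow> bool" where
  "simple_graph V E \<longleftrightarrow>
     (\<forall>x y. E x y \<longrightarrow> x \<in> V \<and> y \<in> V) \<and>
     (\<forall>x y. E x y \<longrightarrow> E y x) \<and> (\<forall>x. \<not> E x x)"

definition compl_graph :: "'a set \<Rightarrow> ('a \<Rightarrow> 'a \<Rightarrow> bool) \<Rightarrow> 'a \<Rightarrow> 'a \<Rightarrow> bool" where
  "compl_graph V E x y \<longleftrightarrow> x \<in> V \<and> y \<in> V \<and> x \<noteq> y \<and> \<not> E x y"

definition orientation :: "('a \<Rightarrow> 'a \<Rightarrow> bool) \<Rightarrow> ('a \<times> 'a) set \<Rightarrow> bool" where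
  "orientation E R \<longleftrightarrow>
     (\<forall>x y. (x, y) \<in> R \<longrightarrow> E x y) \<and>
     (\<forall>x y. E x y \<longrightarrow> ((x, y) \<in> R \<longleftrightarrow> (y, x) \<notin> R))"

definition transitive_orientation :: "('a \<Rightarrow> 'a \<Rightarrow> bool) \<Rightarrow> ('a \<times> 'a) set \<Rightarrow> bool" where
  "transitive_orientation E R \<longleftrightarrow> orientation E R \<and> trans R"

definition trans_orients :: "('a \<Rightarrow> 'a \<Rightarrow> bool) \<Rightarrow> ('a \<times> 'a) set set" where
  "trans_orients E = {R. transitive_orientation E R}"

definition comparability_graph :: "'a set \<Rightarrow> ('a \<Rightarrow> 'a \<Rightarrow> bool) \<Rightarrow> bool" where
  "comparability_graph V E \<longleftrightarrow> (\<exists>R. transitive_orientation E R)"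

definition permutation_graph :: "'a set \<Rightarrow> ('a \<Rightarrow> 'a \<Rightarrow> bool) \<Rightarrow> bool" where
  "permutation_graph V E \<longleftrightarrow> finite V \<and> simple_graph V E \<and>
     comparability_graph V E \<and> comparability_graph V (compl_graph V E)"

definition graph_aut :: "'a set \<Rightarrow> ('a \<Rightarrow> 'a \<Rightarrow> bool) \<Rightarrow> ('a \<Rightarrow> 'a) set" where
  "graph_aut V E = {\<pi>. bij_betw \<pi> V V \<and> (\<forall>x\<in>V. \<forall>y\<in>V. E x y \<longleftrightarrow> E (\<pi> x) (\<pi> y))}"

definition orient_map :: "('a \<Rightarrow> 'a) \<Rightarrow> ('a \<times> 'a) set \<Rightarrow> ('a \<times> 'a) set" where
  "orient_map \<pi> R = (\<lambda>(x, y). (\<pi> x, \<pi> y)) ` R"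

end

theory Submission
  imports Defs
begin

text \<open>A transitive orientation of a graph and one of its complement together orient every
  pair of distinct vertices, and their union is again transitive: it is a linear order of
  the vertices.  An automorphism fixing both orientations preserves this linear order, and a
  finite linear order has no nontrivial order automorphism.\<close>

lemma trans_Un_if_orthogonal:
  assumes "trans R" "trans S" "R \<inter> S = {}" "R \<inter> S\<inverse> = {}"
    and "total_on V (R \<union> S)" "R \<union> S \<subseteq> V \<times> V"
  shows "trans (R \<union> S)"
proof -
  have mixed: "(a, c) \<in> R \<union> S"
    if "trans R" "trans S" "R \<inter> S = {}" "R \<inter> S\<inverse> = {}"
      "total_on V (R \<union> S)" "R \<union> S \<subseteq> V \<times> V" "(a, b) \<in> R" "(b, c) \<in> S"
    for R S :: "('a \<times> 'a) set" and a b c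
  proof (rule ccontr)
    assume "(a, c) \<notin> R \<union> S"
    moreover have "a \<noteq> c" using that(4,7,8) by blast
    moreover have "a \<in> V" "c \<in> V" using that(6-8) by blast+
    ultimately have "(c, a) \<in> R \<union> S" using \<open>total_on V (R \<union> S)\<close> by (auto simp: total_on_def)
    then show False
    proof
      assume "(c, a) \<in> R"
      then have "(c, b) \<in> R" using \<open>trans R\<close> \<open>(a, b) \<in> R\<close> by (blast dest: transD)
      then show False using \<open>R \<inter> S\<inverse> = {}\<close> \<open>(b, c) \<in> S\<close> by blast
    next
      assume "(c, a) \<in> S"
      then have "(b, a) \<in> S" using \<open>trans S\<close> \<open>(b, c) \<in> S\<close> by (blast dest: transD)
      then show False using \<open>R \<inter> S\<inverse> = {}\<close> \<open>(a, b) \<in> R\<close> by blast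
    qed
  qed
  have "S \<inter> R = {}" "S \<inter> R\<inverse> = {}" "total_on V (S \<union> R)" "S \<union> R \<subseteq> V \<times> V"
    using assms by (auto simp: Un_commute)
  note swapped = mixed[OF \<open>trans S\<close> \<open>trans R\<close> this]
  show ?thesis
    by (rule transI) (use assms mixed[OF assms] swapped in \<open>blast dest: transD\<close>)
qed

lemma strict_linear_order_on_Un_transitive_orientations:
  assumes "simple_graph V E"
    and "transitive_orientation E R" "transitive_orientation (compl_graph V E) S"
  shows "strict_linear_order_on V (R \<union> S)" "R \<union> S \<subseteq> V \<times> V"
proof -
  have R: "\<And>x y. (x, y) \<in> R \<Longrightarrow> E x y" "\<And>x y. E x y \<Longrightarrow> (x, y) \<in> R \<or> (y, x) \<in> R" "trans R"
    using assms(2) unfolding transitive_orientation_def orientation_def by blast+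
  have S: "\<And>x y. (x, y) \<in> S \<Longrightarrow> compl_graph V E x y"
    "\<And>x y. compl_graph V E x y \<Longrightarrow> (x, y) \<in> S \<or> (y, x) \<in> S" "trans S"
    using assms(3) unfolding transitive_orientation_def orientation_def by blast+
  have E: "\<And>x y. E x y \<Longrightarrow> x \<in> V \<and> y \<in> V" "\<And>x y. E x y \<Longrightarrow> E y x" "\<And>x. \<not> E x x"
    using assms(1) unfolding simple_graph_def by blast+
  show sub: "R \<union> S \<subseteq> V \<times> V"
    using R(1) S(1) E(1) by (fastforce simp: compl_graph_def)
  have "R \<inter> S = {}" "R \<inter> S\<inverse> = {}"
    using R(1) S(1) E(2) by (fastforce simp: compl_graph_def)+
  moreover have "total_on V (R \<union> S)"
    unfolding total_on_def using R(2) S(2) by (metis UnI1 UnI2 compl_graph_def)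
  moreover have "irrefl (R \<union> S)"
    unfolding irrefl_def using R(1) S(1) E(3) by (fastforce simp: compl_graph_def)
  ultimately show "strict_linear_order_on V (R \<union> S)"
    unfolding strict_linear_order_on_def using trans_Un_if_orthogonal[OF R(3) S(3)] sub by blast
qed

text \<open>Each element is determined by its number of predecessors, and an order-preserving
  bijection cannot decrease that number; since the numbers sum to the same total before and
  after applying the bijection, none of them changes.\<close>

lemma finite_strict_linear_order_automorphism_eq_id:
  assumes "finite V" "strict_linear_order_on V L" "L \<subseteq> V \<times> V"
    and "bij_betw \<pi> V V" and mono: "\<And>x y. (x, y) \<in> L \<Longrightarrow> (\<pi> x, \<pi> y) \<in> L"
    and "v \<in> V"
  shows "\<pi> v = v"
proof -
  define rank where "rank w = card {u \<in> V. (u, w) \<in> L}" for w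
  have L: "trans L" "irrefl L" "total_on V L"
    using assms(2) unfolding strict_linear_order_on_def by blast+
  have rank_less: "rank u < rank w" if "(u, w) \<in> L" for u w
  proof -
    have "insert u {x \<in> V. (x, u) \<in> L} \<subseteq> {x \<in> V. (x, w) \<in> L}"
      using that L(1) assms(3) by (blast dest: transD)
    moreover have "u \<notin> {x \<in> V. (x, u) \<in> L}" using L(2) by (simp add: irrefl_def)
    ultimately have "card (insert u {x \<in> V. (x, u) \<in> L}) \<le> rank w"
      unfolding rank_def using \<open>finite V\<close> by (intro card_mono) auto
    then show ?thesis
      unfolding rank_def using \<open>finite V\<close> \<open>u \<notin> {x \<in> V. (x, u) \<in> L}\<close> by simp
  qed
  have "inj_on rank V"
  proof (rule inj_onI, rule ccontr)
    fix x y assume "x \<in> V" "y \<in> V" "rank x = rank y" "x \<noteq> y"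
    then have "(x, y) \<in> L \<or> (y, x) \<in> L" using L(3) by (simp add: total_on_def)
    then show False using rank_less \<open>rank x = rank y\<close> by fastforce
  qed
  have \<pi>V: "inj_on \<pi> V" "\<pi> ` V = V"
    using assms(4) by (simp_all add: bij_betw_def)
  have \<pi>_mem: "\<pi> x \<in> V" if "x \<in> V" for x
    using assms(4) that by (rule bij_betw_apply)
  have rank_le: "rank x \<le> rank (\<pi> x)" if "x \<in> V" for x
  proof -
    have "\<pi> ` {u \<in> V. (u, x) \<in> L} \<subseteq> {u \<in> V. (u, \<pi> x) \<in> L}"
      using mono \<pi>_mem by blast
    moreover have "inj_on \<pi> {u \<in> V. (u, x) \<in> L}"
      using \<pi>V(1) by (rule inj_on_subset) blast
    ultimately show ?thesis
      unfolding rank_def using \<open>finite V\<close> by (simp add: card_inj_on_le)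
  qed
  have "sum rank V = sum (rank \<circ> \<pi>) V"
    using sum.reindex[OF \<pi>V(1), of rank] \<pi>V(2) by simp
  then have "rank v = rank (\<pi> v)"
    using sum_mono_inv[of rank V "rank \<circ> \<pi>" v] rank_le \<open>finite V\<close> \<open>v \<in> V\<close> by simp
  then show ?thesis
    using inj_onD[OF \<open>inj_on rank V\<close>] \<pi>_mem \<open>v \<in> V\<close> by metis
qed

lemma orient_map_fixed_imp_mem:
  assumes "orient_map \<pi> R = R" "(x, y) \<in> R"
  shows "(\<pi> x, \<pi> y) \<in> R"
  using assms unfolding orient_map_def by force

theorem mainTheorem5:
  fixes V :: "'a set" and E :: "'a \<Rightarrow> 'a \<Rightarrow> bool"
  assumes "permutation_graph V E"
  shows "\<forall>P \<in> trans_orients E \<times> trans_orients (compl_graph V E).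
           \<forall>\<pi> \<in> graph_aut V E.
             (orient_map \<pi> (fst P), orient_map \<pi> (snd P)) = P \<longrightarrow> (\<forall>v\<in>V. \<pi> v = v)"
proof (intro ballI impI)
  fix P \<pi> v
  assume "P \<in> trans_orients E \<times> trans_orients (compl_graph V E)" "\<pi> \<in> graph_aut V E"
    and fixed: "(orient_map \<pi> (fst P), orient_map \<pi> (snd P)) = P" and "v \<in> V"
  then obtain R S where P: "P = (R, S)" "transitive_orientation E R"
      "transitive_orientation (compl_graph V E) S" and "bij_betw \<pi> V V"
    by (auto simp: trans_orients_def graph_aut_def)
  have "finite V" "simple_graph V E"
    using assms unfolding permutation_graph_def by blast+
  note order = strict_linear_order_on_Un_transitive_orientations[OF this(2) P(2,3)]
  have "(\<pi> x, \<pi> y) \<in> R \<union> S" if "(x, y) \<in> R \<union> S" for x y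
    using fixed that orient_map_fixed_imp_mem[of \<pi> R] orient_map_fixed_imp_mem[of \<pi> S]
    by (auto simp: P(1))
  then show "\<pi> v = v"
    using finite_strict_linear_order_automorphism_eq_id[OF \<open>finite V\<close> order \<open>bij_betw \<pi> V V\<close>]
      \<open>v \<in> V\<close> by blast
qed

end
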